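(* Let $R$ be a $*$-ring and $I$ an ideal of $R$ with $I^*\subseteq I$ and $I\subseteq J(R)$. Then $R$ is strongly $J$-$*$-clean if and only if (1) $R/I$ (with the induced involution $(a+I)^*=a^*+I$) is strongly $J$-$*$-clean; (2) $R$ is abelian; and (3) every idempotent lifts modulo $I$.
   Context: All rings are associative with identity. A $*$-ring is a ring $R$ with an involution $*$, i.e. a map $a\mapsto a^*$ with $(a+b)^*=a^*+b^*$, $(ab)^*=b^*a^*$, $(a^* )^*=a$. $J(R)$ denotes the Jacobson radical of $R$. A projection is an element $e$ with $e^2=e=e^*$. A $*$-ring $R$ is strongly $J$-$*$-clean if every $a\in R$ can be written $a=e+u$ with $e$ a projection, $u\in J(R)$ and $ae=ea$. A ring is abelian if all its idempotents are central. Idempotents lift modulo $I$ means: for every $x\in R$ with $x-x^2\in I$ there is an idempotent $f\in R$ with $x-f\in I$. *)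

theory Defs
  imports "HOL-Algebra.QuotRing"
begin

definition star_ring :: "('a, 'b) ring_scheme \<Rightarrow> ('a \<Rightarrow> 'a) \<Rightarrow> bool" where
  "star_ring R sigma \<longleftrightarrow> ring R \<and>
     (\<forall>a\<in>carrier R. sigma a \<in> carrier R) \<and>
     (\<forall>a\<in>carrier R. \<forall>b\<in>carrier R. sigma (a \<oplus>\<^bsub>R\<^esub> b) = sigma a \<oplus>\<^bsub>R\<^esub> sigma b) \<and>
     (\<forall>a\<in>carrier R. \<forall>b\<in>carrier R. sigma (a \<otimes>\<^bsub>R\<^esub> b) = sigma b \<otimes>\<^bsub>R\<^esub> sigma a) \<and>
     (\<forall>a\<in>carrier R. sigma (sigma a) = a)"

definition left_ideal :: "'a set \<Rightarrow> ('a, 'b) ring_scheme \<Rightarrow> bool" where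
  "left_ideal L R \<longleftrightarrow> additive_subgroup L R \<and>
     (\<forall>r\<in>carrier R. \<forall>x\<in>L. r \<otimes>\<^bsub>R\<^esub> x \<in> L)"

definition maximal_left_ideal :: "'a set \<Rightarrow> ('a, 'b) ring_scheme \<Rightarrow> bool" where
  "maximal_left_ideal M R \<longleftrightarrow> left_ideal M R \<and> M \<noteq> carrier R \<and>
     (\<forall>L. left_ideal L R \<longrightarrow> M \<subseteq> L \<longrightarrow> L = M \<or> L = carrier R)"

definition jacobson :: "('a, 'b) ring_scheme \<Rightarrow> 'a set" where
  "jacobson R = {a \<in> carrier R. \<forall>M. maximal_left_ideal M R \<longrightarrow> a \<in> M}"

definition projection :: "('a, 'b) ring_scheme \<Rightarrow> ('a \<Rightarrow> 'a) \<Rightarrow> 'a \<Rightarrow> bool" where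
  "projection R sigma e \<longleftrightarrow> e \<in> carrier R \<and> e \<otimes>\<^bsub>R\<^esub> e = e \<and> sigma e = e"

definition strongly_J_star_clean :: "('a, 'b) ring_scheme \<Rightarrow> ('a \<Rightarrow> 'a) \<Rightarrow> bool" where
  "strongly_J_star_clean R sigma \<longleftrightarrow>
     (\<forall>a\<in>carrier R. \<exists>e u. projection R sigma e \<and> u \<in> jacobson R \<and>
        a = e \<oplus>\<^bsub>R\<^esub> u \<and> a \<otimes>\<^bsub>R\<^esub> e = e \<otimes>\<^bsub>R\<^esub> a)"

definition abelian_ring :: "('a, 'b) ring_scheme \<Rightarrow> bool" where
  "abelian_ring R \<longleftrightarrow> (\<forall>e\<in>carrier R. e \<otimes>\<^bsub>R\<^esub> e = e \<longrightarrow>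
      (\<forall>x\<in>carrier R. e \<otimes>\<^bsub>R\<^esub> x = x \<otimes>\<^bsub>R\<^esub> e))"

definition idempotents_lift :: "('a, 'b) ring_scheme \<Rightarrow> 'a set \<Rightarrow> bool" where
  "idempotents_lift R I \<longleftrightarrow> (\<forall>x\<in>carrier R. x \<ominus>\<^bsub>R\<^esub> x \<otimes>\<^bsub>R\<^esub> x \<in> I \<longrightarrow>
      (\<exists>f\<in>carrier R. f \<otimes>\<^bsub>R\<^esub> f = f \<and> x \<ominus>\<^bsub>R\<^esub> f \<in> I))"

text \<open>Induced involution on R/I: (a + I)^* = a^* + I, computed from any representative.\<close>
definition quot_star :: "('a, 'b) ring_scheme \<Rightarrow> 'a set \<Rightarrow> ('a \<Rightarrow> 'a) \<Rightarrow> 'a set \<Rightarrow> 'a set" where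
  "quot_star R I sigma X = I +>\<^bsub>R\<^esub> sigma (SOME x. x \<in> X)"

end

theory Submission
  imports Defs "HOL-Algebra.Multiplicative_Group"
begin

text \<open>
  Two commuting idempotents that are congruent modulo \<open>J(R)\<close> coincide, so in a strongly
  J-*-clean ring the idempotent part of a decomposition is unique; decomposing an idempotent
  shows that every idempotent is a projection. Since \<open>e \<oplus> e y (\<one> \<ominus> e)\<close> is again idempotent,
  hence self-adjoint, all corners \<open>e y (\<one> \<ominus> e)\<close> vanish and idempotents are central.
  If \<open>x = e \<oplus> u\<close> is a decomposition, then \<open>x \<ominus> x\<^sup>2\<close> is \<open>u\<close> times a unit, so
  \<open>x \<ominus> x\<^sup>2 \<in> I\<close> forces \<open>u \<in> I\<close> and \<open>e\<close> lifts \<open>x\<close>.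
  Conversely, a projection of \<open>R/I\<close> lifts to a central idempotent \<open>f\<close> with \<open>f\<^sup>* \<equiv> f\<close> modulo
  \<open>J(R)\<close>, so \<open>f\<close> is a projection, and the remainder lies in \<open>J(R)\<close> because \<open>J(R/I)\<close>
  pulls back to \<open>J(R)\<close> when \<open>I \<subseteq> J(R)\<close>.
\<close>

subsection \<open>Left ideals and the Jacobson radical\<close>

lemma (in ring) left_idealI:
  assumes "L \<subseteq> carrier R" "\<zero> \<in> L" "\<And>a b. a \<in> L \<Longrightarrow> b \<in> L \<Longrightarrow> a \<oplus> b \<in> L"
    and "\<And>r a. r \<in> carrier R \<Longrightarrow> a \<in> L \<Longrightarrow> r \<otimes> a \<in> L"
  shows "left_ideal L R"
proof -
  have "\<ominus> a \<in> L" if "a \<in> L" for a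
  proof -
    have "(\<ominus> \<one>) \<otimes> a \<in> L"
      using assms(4) that by simp
    then show ?thesis
      using that assms(1) by (simp add: l_minus subsetD)
  qed
  then have "additive_subgroup L R"
    unfolding additive_subgroup_def using assms by (intro subgroup.intro) (auto simp: a_inv_def[symmetric])
  then show ?thesis
    using assms unfolding left_ideal_def by blast
qed

lemma (in ring) left_idealD:
  assumes "left_ideal L R"
  shows "L \<subseteq> carrier R" "\<zero> \<in> L" "\<And>a b. a \<in> L \<Longrightarrow> b \<in> L \<Longrightarrow> a \<oplus> b \<in> L"
    and "\<And>a. a \<in> L \<Longrightarrow> \<ominus> a \<in> L" "\<And>r a. r \<in> carrier R \<Longrightarrow> a \<in> L \<Longrightarrow> r \<otimes> a \<in> L"
  using assms unfolding left_ideal_def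
  by (auto dest: additive_subgroup.a_subset additive_subgroup.zero_closed
        additive_subgroup.a_closed additive_subgroup.a_inv_closed)

lemma (in ring) left_ideal_one_eq_carrier:
  assumes "left_ideal L R" "\<one> \<in> L"
  shows "L = carrier R"
proof
  show "carrier R \<subseteq> L"
    using left_idealD(5)[OF assms(1) _ assms(2)] by (metis r_one subsetI)
qed (rule left_idealD(1)[OF assms(1)])

lemma (in ring) left_ideal_principal:
  assumes "y \<in> carrier R"
  shows "left_ideal {s \<otimes> y | s. s \<in> carrier R} R"
proof (rule left_idealI)
  show "\<zero> \<in> {s \<otimes> y | s. s \<in> carrier R}"
    using assms by (auto intro!: exI[of _ \<zero>])
  show "a \<oplus> b \<in> {s \<otimes> y | s. s \<in> carrier R}"
    if "a \<in> {s \<otimes> y | s. s \<in> carrier R}" "b \<in> {s \<otimes> y | s. s \<in> carrier R}" for a b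
    using that assms by (force simp: l_distr[symmetric])
  show "r \<otimes> a \<in> {s \<otimes> y | s. s \<in> carrier R}"
    if "r \<in> carrier R" "a \<in> {s \<otimes> y | s. s \<in> carrier R}" for r a
    using that assms by (force simp: m_assoc[symmetric])
qed (use assms in auto)

lemma (in ring) left_ideal_add_principal:
  assumes M: "left_ideal M R" and x: "x \<in> carrier R"
  shows "left_ideal {m \<oplus> s \<otimes> x | m s. m \<in> M \<and> s \<in> carrier R} R"
    (is "left_ideal ?L R")
proof (rule left_idealI)
  note M_carrier = subsetD[OF left_idealD(1)[OF M]]
  show "?L \<subseteq> carrier R"
    using M_carrier x by auto
  show "\<zero> \<in> ?L"
    using left_idealD(2)[OF M] x by (auto intro!: exI[of _ \<zero>])
  show "a \<oplus> b \<in> ?L" if ab: "a \<in> ?L" "b \<in> ?L" for a b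
  proof -
    obtain m s m' s' where ms: "m \<in> M" "s \<in> carrier R" "m' \<in> M" "s' \<in> carrier R"
      and "a = m \<oplus> s \<otimes> x" "b = m' \<oplus> s' \<otimes> x"
      using ab by blast
    then have "a \<oplus> b = (m \<oplus> m') \<oplus> (s \<oplus> s') \<otimes> x"
      using M_carrier x by (simp add: l_distr a_ac)
    then show ?thesis
      using ms left_idealD(3)[OF M] by blast
  qed
  show "r \<otimes> a \<in> ?L" if r: "r \<in> carrier R" and a: "a \<in> ?L" for r a
  proof -
    obtain m s where ms: "m \<in> M" "s \<in> carrier R" and "a = m \<oplus> s \<otimes> x"
      using a by blast
    then have "r \<otimes> a = r \<otimes> m \<oplus> (r \<otimes> s) \<otimes> x"
      using r M_carrier x by (simp add: r_distr m_assoc)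
    then show ?thesis
      using ms r left_idealD(5)[OF M] by blast
  qed
qed

lemma (in ring) left_ideal_Union_chain:
  assumes "C \<noteq> {}" "\<And>L. L \<in> C \<Longrightarrow> left_ideal L R" "chain\<^sub>\<subseteq> C"
  shows "left_ideal (\<Union>C) R"
proof (rule left_idealI)
  show "\<Union>C \<subseteq> carrier R" "\<zero> \<in> \<Union>C"
    using assms(1,2) left_idealD(1,2) by blast+
  show "a \<oplus> b \<in> \<Union>C" if ab: "a \<in> \<Union>C" "b \<in> \<Union>C" for a b
  proof -
    obtain X Y where "X \<in> C" "Y \<in> C" "a \<in> X" "b \<in> Y"
      using ab by blast
    then show ?thesis
      using assms(2,3) left_idealD(3) unfolding chain_subset_def by (metis UnionI subsetD)
  qed
  show "r \<otimes> a \<in> \<Union>C" if "r \<in> carrier R" "a \<in> \<Union>C" for r a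
    using that assms(2) left_idealD(5) by blast
qed

lemma (in ring) maximal_left_ideal_exists:
  assumes "left_ideal L R" "\<one> \<notin> L"
  shows "\<exists>M. maximal_left_ideal M R \<and> L \<subseteq> M"
proof -
  define \<A> where "\<A> = {M. left_ideal M R \<and> L \<subseteq> M \<and> \<one> \<notin> M}"
  have "\<exists>M\<in>\<A>. \<forall>X\<in>\<A>. M \<subseteq> X \<longrightarrow> X = M"
  proof (rule subset_Zorn_nonempty)
    show "\<A> \<noteq> {}"
      using assms unfolding \<A>_def by blast
    show "\<Union>C \<in> \<A>" if "C \<noteq> {}" "subset.chain \<A> C" for C
      using that left_ideal_Union_chain[of C]
      unfolding \<A>_def subset.chain_def chain_subset_def by blast
  qed
  then obtain M where "M \<in> \<A>" and maximal: "\<And>X. X \<in> \<A> \<Longrightarrow> M \<subseteq> X \<Longrightarrow> X = M"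
    by blast
  then have M: "left_ideal M R" "L \<subseteq> M" "\<one> \<notin> M"
    unfolding \<A>_def by auto
  have "maximal_left_ideal M R"
    unfolding maximal_left_ideal_def
  proof (intro conjI allI impI)
    fix N assume N: "left_ideal N R" "M \<subseteq> N"
    show "N = M \<or> N = carrier R"
      using N M(2) maximal left_ideal_one_eq_carrier unfolding \<A>_def by blast
  qed (use M in auto)
  then show ?thesis
    using M by blast
qed

lemma (in ring) jacobson_subset: "jacobson R \<subseteq> carrier R"
  unfolding jacobson_def by auto

lemma (in ring) jacobson_l_closed:
  "r \<in> carrier R \<Longrightarrow> x \<in> jacobson R \<Longrightarrow> r \<otimes> x \<in> jacobson R"
  unfolding jacobson_def maximal_left_ideal_def using left_idealD(5) by auto

lemma (in ring) jacobson_a_inv_closed: "x \<in> jacobson R \<Longrightarrow> \<ominus> x \<in> jacobson R"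
  unfolding jacobson_def maximal_left_ideal_def using left_idealD(4) by auto

lemma (in ring) jacobson_left_inverse:
  assumes x: "x \<in> jacobson R" and r: "r \<in> carrier R"
  shows "\<exists>w\<in>carrier R. w \<otimes> (\<one> \<ominus> r \<otimes> x) = \<one>"
proof (rule ccontr)
  assume no_inverse: "\<not> ?thesis"
  define y where "y = \<one> \<ominus> r \<otimes> x"
  have x_carrier: "x \<in> carrier R" and y: "y \<in> carrier R"
    using x r jacobson_subset unfolding y_def by auto
  have "\<one> \<notin> {s \<otimes> y | s. s \<in> carrier R}"
    using no_inverse unfolding y_def by auto
  then obtain M where M: "maximal_left_ideal M R" and "{s \<otimes> y | s. s \<in> carrier R} \<subseteq> M"
    using maximal_left_ideal_exists left_ideal_principal[OF y] by blast
  then have "\<one> \<otimes> y \<in> M"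
    by blast
  moreover have "r \<otimes> x \<in> M"
    using M x r left_idealD(5) unfolding jacobson_def maximal_left_ideal_def by blast
  ultimately have "y \<oplus> r \<otimes> x \<in> M"
    using M left_idealD(3) y unfolding maximal_left_ideal_def by auto
  moreover have "y \<oplus> r \<otimes> x = \<one>"
    using x_carrier r unfolding y_def by (simp add: minus_eq a_assoc l_neg)
  ultimately show False
    using M left_ideal_one_eq_carrier unfolding maximal_left_ideal_def by auto
qed

lemma (in ring) jacobsonI:
  assumes x: "x \<in> carrier R"
    and inverse: "\<And>r. r \<in> carrier R \<Longrightarrow> \<exists>w\<in>carrier R. w \<otimes> (\<one> \<ominus> r \<otimes> x) = \<one>"
  shows "x \<in> jacobson R"
  unfolding jacobson_def
proof (intro CollectI conjI allI impI x)
  fix M assume "maximal_left_ideal M R"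
  then have M: "left_ideal M R" "M \<noteq> carrier R"
    and maximal: "\<And>L. left_ideal L R \<Longrightarrow> M \<subseteq> L \<Longrightarrow> L = M \<or> L = carrier R"
    unfolding maximal_left_ideal_def by auto
  note M_carrier = subsetD[OF left_idealD(1)[OF M(1)]]
  show "x \<in> M"
  proof (rule ccontr)
    assume "x \<notin> M"
    define L where "L = {m \<oplus> s \<otimes> x | m s. m \<in> M \<and> s \<in> carrier R}"
    have "M \<subseteq> L"
    proof
      fix m assume "m \<in> M"
      moreover have "m = m \<oplus> \<zero> \<otimes> x"
        using calculation M_carrier x by simp
      ultimately show "m \<in> L"
        unfolding L_def by blast
    qed
    moreover have "x = \<zero> \<oplus> \<one> \<otimes> x"
      using x by simp
    then have "x \<in> L"
      using left_idealD(2)[OF M(1)] unfolding L_def by blast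
    ultimately have "L = carrier R"
      using maximal left_ideal_add_principal[OF M(1) x] \<open>x \<notin> M\<close> unfolding L_def by blast
    then have "\<one> \<in> L"
      by simp
    then obtain m s where ms: "m \<in> M" "s \<in> carrier R" "\<one> = m \<oplus> s \<otimes> x"
      unfolding L_def by blast
    then have "\<one> \<ominus> s \<otimes> x = m"
      using M_carrier x by (simp add: minus_eq a_assoc r_neg)
    moreover obtain w where "w \<in> carrier R" "w \<otimes> (\<one> \<ominus> s \<otimes> x) = \<one>"
      using inverse ms(2) by blast
    ultimately have "\<one> \<in> M"
      using left_idealD(5)[OF M(1)] ms(1) by metis
    then show False
      using left_ideal_one_eq_carrier M by blast
  qed
qed

lemma (in ring) one_minus_jacobson_Units:
  assumes j: "j \<in> jacobson R"
  shows "\<one> \<ominus> j \<in> Units R"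
proof -
  have j_carrier: "j \<in> carrier R"
    using j jacobson_subset by blast
  obtain w where w: "w \<in> carrier R" "w \<otimes> (\<one> \<ominus> j) = \<one>"
    using jacobson_left_inverse[OF j one_closed] j_carrier by auto
  have "\<ominus> (w \<otimes> j) \<in> jacobson R"
    using jacobson_a_inv_closed jacobson_l_closed w j by blast
  then obtain v where v: "v \<in> carrier R" "v \<otimes> (\<one> \<ominus> \<ominus> (w \<otimes> j)) = \<one>"
    using jacobson_left_inverse[OF _ one_closed] w j_carrier by (metis l_one a_inv_closed m_closed)
  \<comment> \<open>\<open>w = \<one> \<oplus> w \<otimes> j\<close> again has a left inverse, so \<open>w\<close> is a unit with inverse \<open>\<one> \<ominus> j\<close>.\<close>
  have "\<one> = w \<oplus> \<ominus> (w \<otimes> j)"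
    using w j_carrier by (simp add: minus_eq r_distr r_minus)
  then have "\<one> \<ominus> \<ominus> (w \<otimes> j) = w"
    using add.inv_solve_right w j_carrier by (simp add: minus_eq)
  then have vw: "v \<otimes> w = \<one>"
    using v by simp
  have "v = (v \<otimes> w) \<otimes> (\<one> \<ominus> j)"
    using v w j_carrier by (simp add: m_assoc)
  then have "(\<one> \<ominus> j) \<otimes> w = \<one>"
    using vw j_carrier by simp
  then show ?thesis
    using w j_carrier unfolding Units_def by auto
qed

lemma (in ring) idempotent_in_jacobson_eq_zero:
  assumes g: "g \<in> jacobson R" and idem: "g \<otimes> g = g"
  shows "g = \<zero>"
proof -
  have g_carrier: "g \<in> carrier R"
    using g jacobson_subset by blast
  have "\<one> \<ominus> g \<in> Units R"
    using one_minus_jacobson_Units[OF g] .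
  moreover have "(\<one> \<ominus> g) \<otimes> g = \<zero>"
    using g_carrier idem by (simp add: minus_eq l_distr l_minus r_neg)
  ultimately have "inv (\<one> \<ominus> g) \<otimes> ((\<one> \<ominus> g) \<otimes> g) = \<zero>"
    by simp
  then show ?thesis
    using \<open>\<one> \<ominus> g \<in> Units R\<close> g_carrier by (simp add: m_assoc[symmetric])
qed

lemma (in ring) commuting_idempotents_eq:
  assumes e: "e \<in> carrier R" "e \<otimes> e = e" and f: "f \<in> carrier R" "f \<otimes> f = f"
    and commute: "e \<otimes> f = f \<otimes> e" and diff: "e \<ominus> f \<in> jacobson R"
  shows "e = f"
proof -
  have absorb: "a = a \<otimes> b"
    if "a \<in> carrier R" "a \<otimes> a = a" "b \<in> carrier R" "b \<otimes> b = b" "a \<otimes> b = b \<otimes> a"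
      and "a \<ominus> b \<in> jacobson R" for a b
  proof -
    have "a \<otimes> (a \<ominus> b) \<in> jacobson R"
      using that jacobson_l_closed by blast
    moreover have "a \<otimes> (a \<ominus> b) = a \<ominus> a \<otimes> b"
      using that by (simp add: minus_eq r_distr r_minus)
    moreover have "(a \<ominus> a \<otimes> b) \<otimes> (a \<ominus> a \<otimes> b) = a \<ominus> a \<otimes> b"
    proof -
      have "a \<otimes> (a \<otimes> b) = a \<otimes> b" "(a \<otimes> b) \<otimes> a = a \<otimes> b" "(a \<otimes> b) \<otimes> (a \<otimes> b) = a \<otimes> b"
        using that by (metis m_assoc m_closed)+
      then show ?thesis
        using that by (simp add: minus_eq l_distr r_distr l_minus r_minus minus_add a_assoc l_neg)
    qed
    ultimately have "a \<ominus> a \<otimes> b = \<zero>"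
      using idempotent_in_jacobson_eq_zero by metis
    then show ?thesis
      using that by simp
  qed
  have "f \<ominus> e = \<ominus> (e \<ominus> f)"
    using e f by (simp add: minus_eq minus_add a_comm)
  then have "f \<ominus> e \<in> jacobson R"
    using diff jacobson_a_inv_closed by simp
  then show ?thesis
    using absorb[OF e f commute diff] absorb[OF f e commute[symmetric]] commute by simp
qed

lemma (in ring) self_inverse_minus_jacobson_Units:
  assumes q: "q \<in> carrier R" "q \<otimes> q = \<one>" and u: "u \<in> jacobson R"
  shows "q \<ominus> u \<in> Units R"
proof -
  have u_carrier: "u \<in> carrier R"
    using u jacobson_subset by blast
  have "q \<ominus> u = q \<otimes> (\<one> \<ominus> q \<otimes> u)"
    using q u_carrier by (simp add: minus_eq r_distr r_minus m_assoc[symmetric])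
  moreover have "q \<in> Units R"
    using q unfolding Units_def by blast
  moreover have "\<one> \<ominus> q \<otimes> u \<in> Units R"
    using one_minus_jacobson_Units jacobson_l_closed q(1) u by blast
  ultimately show ?thesis
    by simp
qed

subsection \<open>The quotient ring\<close>

context ideal
begin

lemma rcos_add_Quot:
  "a \<in> carrier R \<Longrightarrow> b \<in> carrier R \<Longrightarrow> (I +> a) \<oplus>\<^bsub>R Quot I\<^esub> (I +> b) = I +> (a \<oplus> b)"
  by (simp add: ring_hom_add[OF rcos_ring_hom])

lemma rcos_mult_Quot:
  "a \<in> carrier R \<Longrightarrow> b \<in> carrier R \<Longrightarrow> (I +> a) \<otimes>\<^bsub>R Quot I\<^esub> (I +> b) = I +> (a \<otimes> b)"
  by (simp add: ring_hom_mult[OF rcos_ring_hom])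

lemma one_Quot: "\<one>\<^bsub>R Quot I\<^esub> = I +> \<one>"
  by (simp add: FactRing_def)

lemma carrier_Quot_iff: "X \<in> carrier (R Quot I) \<longleftrightarrow> (\<exists>a\<in>carrier R. X = I +> a)"
  by (simp add: FactRing_def A_RCOSETS_def')

lemma rcos_minus_Quot:
  assumes "a \<in> carrier R" "b \<in> carrier R"
  shows "(I +> a) \<ominus>\<^bsub>R Quot I\<^esub> (I +> b) = I +> (a \<ominus> b)"
proof -
  interpret rcos: ring_hom_ring R "R Quot I" "(+>) I"
    by (rule rcos_ring_hom_ring)
  show ?thesis
    using assms by (simp add: minus_eq rcos.S.minus_eq)
qed

lemma rcos_eq_iff: "a \<in> carrier R \<Longrightarrow> b \<in> carrier R \<Longrightarrow> I +> a = I +> b \<longleftrightarrow> a \<ominus> b \<in> I"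
  using quotient_eq_iff_same_a_r_cos[OF is_ideal] by simp

lemma rcos_in_jacobson_Quot:
  assumes a: "a \<in> jacobson R"
  shows "I +> a \<in> jacobson (R Quot I)"
proof (rule ring.jacobsonI[OF quotient_is_ring])
  show "I +> a \<in> carrier (R Quot I)"
    using a jacobson_subset carrier_Quot_iff by auto
  fix Y assume "Y \<in> carrier (R Quot I)"
  then obtain r where r: "r \<in> carrier R" and Y: "Y = I +> r"
    using carrier_Quot_iff by blast
  obtain w where w: "w \<in> carrier R" "w \<otimes> (\<one> \<ominus> r \<otimes> a) = \<one>"
    using jacobson_left_inverse[OF a r] by blast
  have "a \<in> carrier R"
    using a jacobson_subset by blast
  then have "(I +> w) \<otimes>\<^bsub>R Quot I\<^esub> (\<one>\<^bsub>R Quot I\<^esub> \<ominus>\<^bsub>R Quot I\<^esub> Y \<otimes>\<^bsub>R Quot I\<^esub> (I +> a))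
      = I +> (w \<otimes> (\<one> \<ominus> r \<otimes> a))"
    using r w(1) unfolding Y one_Quot by (simp add: rcos_mult_Quot rcos_minus_Quot)
  then have "(I +> w) \<otimes>\<^bsub>R Quot I\<^esub> (\<one>\<^bsub>R Quot I\<^esub> \<ominus>\<^bsub>R Quot I\<^esub> Y \<otimes>\<^bsub>R Quot I\<^esub> (I +> a))
      = \<one>\<^bsub>R Quot I\<^esub>"
    unfolding w(2) one_Quot .
  then show "\<exists>W\<in>carrier (R Quot I). W \<otimes>\<^bsub>R Quot I\<^esub>
      (\<one>\<^bsub>R Quot I\<^esub> \<ominus>\<^bsub>R Quot I\<^esub> Y \<otimes>\<^bsub>R Quot I\<^esub> (I +> a)) = \<one>\<^bsub>R Quot I\<^esub>"
    using w(1) carrier_Quot_iff by blast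
qed

lemma in_jacobson_if_rcos_in_jacobson_Quot:
  assumes I: "I \<subseteq> jacobson R" and a: "a \<in> carrier R" and Ia: "I +> a \<in> jacobson (R Quot I)"
  shows "a \<in> jacobson R"
proof (rule jacobsonI[OF a])
  fix r assume r: "r \<in> carrier R"
  obtain W where W: "W \<in> carrier (R Quot I)"
    "W \<otimes>\<^bsub>R Quot I\<^esub> (\<one>\<^bsub>R Quot I\<^esub> \<ominus>\<^bsub>R Quot I\<^esub> (I +> r) \<otimes>\<^bsub>R Quot I\<^esub> (I +> a))
      = \<one>\<^bsub>R Quot I\<^esub>"
    using ring.jacobson_left_inverse[OF quotient_is_ring Ia] r carrier_Quot_iff by blast
  then obtain w where w: "w \<in> carrier R" "W = I +> w"
    using carrier_Quot_iff by blast
  define y where "y = w \<otimes> (\<one> \<ominus> r \<otimes> a)"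
  have y: "y \<in> carrier R"
    using w r a unfolding y_def by simp
  have "I +> \<one> = I +> y"
    using W(2) w r a unfolding y_def one_Quot by (simp add: rcos_mult_Quot rcos_minus_Quot)
  \<comment> \<open>\<open>y\<close> is congruent to \<open>\<one>\<close> modulo \<open>I \<subseteq> J(R)\<close>, hence a unit.\<close>
  then have "\<one> \<ominus> y \<in> jacobson R"
    using rcos_eq_iff y I by blast
  then have "\<one> \<ominus> (\<one> \<ominus> y) \<in> Units R"
    by (rule one_minus_jacobson_Units)
  moreover have "\<one> \<ominus> (\<one> \<ominus> y) = y"
    using y by (simp add: minus_eq minus_add a_assoc[symmetric] r_neg)
  ultimately have "inv y \<otimes> y = \<one>" "inv y \<in> carrier R"
    by simp_all
  then show "\<exists>v\<in>carrier R. v \<otimes> (\<one> \<ominus> r \<otimes> a) = \<one>"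
    using w r a unfolding y_def by (metis m_assoc m_closed minus_closed one_closed)
qed

end

subsection \<open>Involutions\<close>

locale involutive_ring = ring R for R (structure) +
  fixes sigma :: "'a \<Rightarrow> 'a"
  assumes star_closed: "a \<in> carrier R \<Longrightarrow> sigma a \<in> carrier R"
    and star_add: "a \<in> carrier R \<Longrightarrow> b \<in> carrier R \<Longrightarrow> sigma (a \<oplus> b) = sigma a \<oplus> sigma b"
    and star_mult: "a \<in> carrier R \<Longrightarrow> b \<in> carrier R \<Longrightarrow> sigma (a \<otimes> b) = sigma b \<otimes> sigma a"
    and star_star: "a \<in> carrier R \<Longrightarrow> sigma (sigma a) = a"

lemma star_ring_iff_involutive_ring: "star_ring R sigma \<longleftrightarrow> involutive_ring R sigma"
  unfolding star_ring_def involutive_ring_def involutive_ring_axioms_def by blast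

context involutive_ring
begin

lemma star_zero: "sigma \<zero> = \<zero>"
  using star_add[of \<zero> \<zero>] star_closed[of \<zero>] by (metis add.l_cancel_one' add.m_closed zero_closed r_zero)

lemma star_a_inv: "a \<in> carrier R \<Longrightarrow> sigma (\<ominus> a) = \<ominus> sigma a"
  using star_add[of "\<ominus> a" a] star_zero star_closed by (metis l_neg minus_equality a_inv_closed)

lemma star_minus: "a \<in> carrier R \<Longrightarrow> b \<in> carrier R \<Longrightarrow> sigma (a \<ominus> b) = sigma a \<ominus> sigma b"
  by (simp add: minus_eq star_add star_a_inv)

lemma star_one: "sigma \<one> = \<one>"
  using star_mult[of "sigma \<one>" \<one>] star_closed[of \<one>] star_star[of \<one>] by simp

lemma quot_star_rcos:
  assumes "ideal I R" "sigma ` I \<subseteq> I" and a: "a \<in> carrier R"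
  shows "quot_star R I sigma (I +> a) = I +> sigma a"
proof -
  interpret ideal I R by fact
  \<comment> \<open>The representative chosen by \<open>SOME\<close> differs from \<open>a\<close> by an element of \<open>I\<close>, which \<open>sigma\<close> preserves.\<close>
  define x where "x = (SOME x. x \<in> I +> a)"
  have "x \<in> I +> a"
    unfolding x_def using a_rcos_self[OF a] by (rule someI)
  then have x: "x \<in> carrier R" "I +> x = I +> a"
    using a a_repr_independence' a_r_coset_subset_G a_subset by blast+
  then have "sigma (x \<ominus> a) \<in> I"
    using assms(2) rcos_eq_iff a by blast
  then show ?thesis
    unfolding quot_star_def x_def[symmetric]
    using rcos_eq_iff star_minus star_closed x(1) a by simp
qed

end

subsection \<open>Strongly J-*-clean rings\<close>

lemma (in ring) strongly_J_star_cleanE: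
  assumes "strongly_J_star_clean R sigma" "a \<in> carrier R"
  obtains e u where "e \<in> carrier R" "e \<otimes> e = e" "sigma e = e" "u \<in> jacobson R"
    "a = e \<oplus> u" "a \<otimes> e = e \<otimes> a"
  using assms unfolding strongly_J_star_clean_def projection_def by blast

lemma (in ring) strongly_J_star_clean_idempotent_fixed:
  assumes sjc: "strongly_J_star_clean R sigma" and e: "e \<in> carrier R" "e \<otimes> e = e"
  shows "sigma e = e"
proof -
  obtain p u where p: "p \<in> carrier R" "p \<otimes> p = p" "sigma p = p" and u: "u \<in> jacobson R"
    and e_decomp: "e = p \<oplus> u" and commute: "e \<otimes> p = p \<otimes> e"
    using strongly_J_star_cleanE[OF sjc e(1)] by blast
  have "u \<in> carrier R"
    using u jacobson_subset by blast
  then have "e \<ominus> p = u"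
    using add.inv_solve_right[of u e p] e_decomp p(1) e(1) by (simp add: minus_eq a_comm)
  then have "e = p"
    using commuting_idempotents_eq[OF e p(1,2) commute] u by simp
  then show ?thesis
    using p by simp
qed

lemma (in involutive_ring) idempotent_corner_eq_zero:
  assumes idempotents_fixed: "\<And>f. f \<in> carrier R \<Longrightarrow> f \<otimes> f = f \<Longrightarrow> sigma f = f"
    and e: "e \<in> carrier R" "e \<otimes> e = e" and y: "y \<in> carrier R"
  shows "e \<otimes> y \<otimes> (\<one> \<ominus> e) = \<zero>"
proof -
  define z where "z = e \<otimes> y \<otimes> (\<one> \<ominus> e)"
  have one_minus_e: "(\<one> \<ominus> e) \<otimes> e = \<zero>" "e \<otimes> (\<one> \<ominus> e) = \<zero>" "sigma (\<one> \<ominus> e) = \<one> \<ominus> e"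
    using e idempotents_fixed[OF e] by (simp_all add: minus_eq l_distr r_distr l_minus r_minus r_neg
        star_add star_a_inv star_one)
  have z: "z \<in> carrier R" "e \<otimes> z = z" "z \<otimes> e = \<zero>"
    unfolding z_def using e y one_minus_e by (simp_all add: m_assoc[symmetric]) (simp add: m_assoc)
  \<comment> \<open>\<open>e \<oplus> z\<close> is idempotent, hence self-adjoint, so \<open>e \<oplus> z = e \<otimes> (e \<oplus> z) = e \<otimes> (e \<oplus> z)\<^sup>* = e\<close>.\<close>
  have "z \<otimes> z = \<zero>"
    using e z by (metis l_null m_assoc)
  then have "(e \<oplus> z) \<otimes> (e \<oplus> z) = e \<oplus> z"
    using e z by (simp add: l_distr r_distr)
  then have fixed: "sigma (e \<oplus> z) = e \<oplus> z"
    using idempotents_fixed e z by simp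
  have "sigma (e \<oplus> z) = e \<oplus> (\<one> \<ominus> e) \<otimes> (sigma y \<otimes> e)"
    unfolding z_def using e y idempotents_fixed[OF e] one_minus_e star_closed
    by (simp add: star_add star_mult m_assoc)
  then have "e \<otimes> sigma (e \<oplus> z) = e"
    using e y star_closed one_minus_e by (simp add: r_distr m_assoc[symmetric])
  moreover have "e \<otimes> (e \<oplus> z) = e \<oplus> z"
    using e z by (simp add: r_distr)
  ultimately have "e \<oplus> z = e"
    using fixed by simp
  then show ?thesis
    unfolding z_def[symmetric] using e z add.l_cancel_one by blast
qed

lemma (in involutive_ring) abelian_if_idempotents_fixed:
  assumes idempotents_fixed: "\<And>f. f \<in> carrier R \<Longrightarrow> f \<otimes> f = f \<Longrightarrow> sigma f = f"
  shows "abelian_ring R"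
  unfolding abelian_ring_def
proof (intro ballI impI)
  fix e x assume e: "e \<in> carrier R" "e \<otimes> e = e" and x: "x \<in> carrier R"
  have "e \<otimes> x \<ominus> e \<otimes> x \<otimes> e = \<zero>"
    using idempotent_corner_eq_zero[OF idempotents_fixed e x] e x by (simp add: minus_eq r_distr r_minus)
  then have ex: "e \<otimes> x = e \<otimes> x \<otimes> e"
    using e x by simp
  have "sigma (e \<otimes> sigma x \<otimes> (\<one> \<ominus> e)) = \<zero>"
    using idempotent_corner_eq_zero[OF idempotents_fixed e star_closed[OF x]] star_zero by simp
  then have "(\<one> \<ominus> e) \<otimes> x \<otimes> e = \<zero>"
    using e x idempotents_fixed[OF e] by (simp add: star_mult star_minus star_one star_star star_closed m_assoc)
  then have "x \<otimes> e \<ominus> e \<otimes> x \<otimes> e = \<zero>"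
    using e x by (simp add: minus_eq l_distr l_minus m_assoc)
  then have "x \<otimes> e = e \<otimes> x \<otimes> e"
    using e x by simp
  then show "e \<otimes> x = x \<otimes> e"
    using ex by simp
qed

lemma (in ring) idempotent_add_minus_square:
  assumes e: "e \<in> carrier R" "e \<otimes> e = e" and u: "u \<in> carrier R" and commute: "u \<otimes> e = e \<otimes> u"
  shows "(e \<oplus> u) \<ominus> (e \<oplus> u) \<otimes> (e \<oplus> u) = u \<otimes> (\<one> \<ominus> e \<ominus> e \<ominus> u)"
proof -
  have cancel: "e \<oplus> (y \<oplus> (\<ominus> e \<oplus> z)) = y \<oplus> z" if "y \<in> carrier R" "z \<in> carrier R" for y z
    using e that by (metis a_lcomm r_neg2 a_inv_closed add.m_closed)
  show ?thesis
    using e u commute by (simp add: minus_eq l_distr r_distr l_minus r_minus minus_add a_ac cancel)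
qed

lemma (in ring) strongly_J_star_clean_idempotents_lift:
  assumes "ideal I R" and sjc: "strongly_J_star_clean R sigma"
  shows "idempotents_lift R I"
  unfolding idempotents_lift_def
proof (intro ballI impI)
  interpret ideal I R by fact
  fix x assume x: "x \<in> carrier R" and x_idem_mod: "x \<ominus> x \<otimes> x \<in> I"
  obtain e u where e: "e \<in> carrier R" "e \<otimes> e = e" and uJ: "u \<in> jacobson R"
    and x_decomp: "x = e \<oplus> u" and commute: "x \<otimes> e = e \<otimes> x"
    using strongly_J_star_cleanE[OF sjc x] by blast
  have u: "u \<in> carrier R"
    using uJ jacobson_subset by blast
  have ue: "u \<otimes> e = e \<otimes> u"
    using commute e u unfolding x_decomp by (simp add: l_distr r_distr)
  \<comment> \<open>\<open>q = \<one> \<ominus> 2e\<close> squares to \<open>\<one>\<close>, and \<open>x \<ominus> x\<^sup>2 = u \<otimes> (q \<ominus> u)\<close> with \<open>q \<ominus> u\<close> a unit.\<close>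
  define q where "q = \<one> \<ominus> e \<ominus> e"
  have q: "q \<in> carrier R" "q \<otimes> q = \<one>"
    unfolding q_def using e by (simp_all add: minus_eq l_distr r_distr l_minus r_minus a_assoc r_neg1 r_neg2 l_neg)
  have "x \<ominus> x \<otimes> x = u \<otimes> (q \<ominus> u)"
    unfolding x_decomp q_def using idempotent_add_minus_square e u ue by blast
  then have "u \<otimes> (q \<ominus> u) \<in> I"
    using x_idem_mod by simp
  moreover have "q \<ominus> u \<in> Units R"
    using self_inverse_minus_jacobson_Units[OF q uJ] .
  ultimately have "u \<otimes> (q \<ominus> u) \<otimes> inv (q \<ominus> u) \<in> I"
    by (simp add: I_r_closed)
  then have "u \<in> I"
    using \<open>q \<ominus> u \<in> Units R\<close> u q by (simp add: m_assoc)
  moreover have "x \<ominus> e = u"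
    using add.inv_solve_right[of u x e] x_decomp e u by (simp add: minus_eq a_comm)
  ultimately show "\<exists>f\<in>carrier R. f \<otimes> f = f \<and> x \<ominus> f \<in> I"
    using e by auto
qed

lemma (in involutive_ring) strongly_J_star_clean_Quot:
  assumes "ideal I R" "sigma ` I \<subseteq> I" and sjc: "strongly_J_star_clean R sigma"
  shows "strongly_J_star_clean (R Quot I) (quot_star R I sigma)"
  unfolding strongly_J_star_clean_def
proof
  interpret ideal I R by fact
  fix X assume "X \<in> carrier (R Quot I)"
  then obtain a where a: "a \<in> carrier R" and X: "X = I +> a"
    using carrier_Quot_iff by blast
  obtain e u where e: "e \<in> carrier R" "e \<otimes> e = e" "sigma e = e" and u: "u \<in> jacobson R"
    and a_decomp: "a = e \<oplus> u" and commute: "a \<otimes> e = e \<otimes> a"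
    using strongly_J_star_cleanE[OF sjc a] by blast
  have "projection (R Quot I) (quot_star R I sigma) (I +> e)"
    unfolding projection_def using e carrier_Quot_iff rcos_mult_Quot quot_star_rcos[OF assms(1,2)] by auto
  moreover have "I +> u \<in> jacobson (R Quot I)"
    using rcos_in_jacobson_Quot[OF u] .
  moreover have "X = (I +> e) \<oplus>\<^bsub>R Quot I\<^esub> (I +> u)"
    using X a_decomp e u jacobson_subset rcos_add_Quot by auto
  moreover have "X \<otimes>\<^bsub>R Quot I\<^esub> (I +> e) = (I +> e) \<otimes>\<^bsub>R Quot I\<^esub> X"
    using X a e commute rcos_mult_Quot by simp
  ultimately show "\<exists>E U. projection (R Quot I) (quot_star R I sigma) E \<and> U \<in> jacobson (R Quot I) \<and>
      X = E \<oplus>\<^bsub>R Quot I\<^esub> U \<and> X \<otimes>\<^bsub>R Quot I\<^esub> E = E \<otimes>\<^bsub>R Quot I\<^esub> X"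
    by blast
qed

lemma (in involutive_ring) strongly_J_star_clean_if_Quot:
  assumes "ideal I R" "sigma ` I \<subseteq> I" "I \<subseteq> jacobson R"
    and Quot: "strongly_J_star_clean (R Quot I) (quot_star R I sigma)"
    and abelian: "abelian_ring R" and lift: "idempotents_lift R I"
  shows "strongly_J_star_clean R sigma"
  unfolding strongly_J_star_clean_def
proof
  interpret ideal I R by fact
  interpret Quot: ring "R Quot I" by (rule quotient_is_ring)
  fix a assume a: "a \<in> carrier R"
  then have "I +> a \<in> carrier (R Quot I)"
    using carrier_Quot_iff by blast
  then obtain E U where E: "projection (R Quot I) (quot_star R I sigma) E" and U: "U \<in> jacobson (R Quot I)"
    and a_decomp: "I +> a = E \<oplus>\<^bsub>R Quot I\<^esub> U"
    using Quot unfolding strongly_J_star_clean_def by blast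
  obtain e where e: "e \<in> carrier R" "E = I +> e"
    using E carrier_Quot_iff unfolding projection_def by blast
  then have "e \<ominus> e \<otimes> e \<in> I"
    using E rcos_mult_Quot rcos_eq_iff unfolding projection_def by (metis m_closed)
  then obtain f where f: "f \<in> carrier R" "f \<otimes> f = f" "e \<ominus> f \<in> I"
    using lift e unfolding idempotents_lift_def by blast
  have E_f: "E = I +> f"
    using rcos_eq_iff e f by simp
  have "U \<in> carrier (R Quot I)" "E \<in> carrier (R Quot I)"
    using U Quot.jacobson_subset E unfolding projection_def by blast+
  then have U_rcos: "I +> (a \<ominus> f) = U"
    unfolding rcos_minus_Quot[OF a f(1), symmetric] a_decomp E_f[symmetric]
    by (simp add: Quot.minus_eq Quot.a_comm Quot.r_neg1)
  \<comment> \<open>\<open>f\<^sup>*\<close> is an idempotent commuting with \<open>f\<close> (as \<open>R\<close> is abelian) and congruent to \<open>f\<close> modulo \<open>J(R)\<close>.\<close>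
  have "I +> sigma f = I +> f"
    using E E_f quot_star_rcos[OF assms(1,2) f(1)] unfolding projection_def by simp
  then have "sigma f \<ominus> f \<in> jacobson R"
    using rcos_eq_iff f(1) star_closed assms(3) by blast
  moreover have "sigma f \<otimes> sigma f = sigma f"
    using star_mult[OF f(1) f(1)] f(2) by simp
  moreover have "sigma f \<otimes> f = f \<otimes> sigma f"
    using abelian calculation(2) f(1) star_closed unfolding abelian_ring_def by blast
  ultimately have "sigma f = f"
    using commuting_idempotents_eq f(1,2) star_closed by blast
  then have "projection R sigma f"
    unfolding projection_def using f by blast
  moreover have "a \<ominus> f \<in> jacobson R"
    using in_jacobson_if_rcos_in_jacobson_Quot[OF assms(3)] U_rcos a f U by auto
  moreover have "a = f \<oplus> (a \<ominus> f)"
    using add.inv_solve_right[of "a \<ominus> f" a f] a f by (simp add: minus_eq a_comm)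
  moreover have "a \<otimes> f = f \<otimes> a"
    using abelian f a unfolding abelian_ring_def by metis
  ultimately show "\<exists>e u. projection R sigma e \<and> u \<in> jacobson R \<and> a = e \<oplus> u \<and> a \<otimes> e = e \<otimes> a"
    by blast
qed

theorem theorem3p7:
  fixes R :: "('a, 'b) ring_scheme" and sigma :: "'a \<Rightarrow> 'a" and I :: "'a set"
  assumes "star_ring R sigma"
    and "ideal I R"
    and "sigma ` I \<subseteq> I"
    and "I \<subseteq> jacobson R"
  shows "strongly_J_star_clean R sigma \<longleftrightarrow>
           strongly_J_star_clean (R Quot I) (quot_star R I sigma) \<and>
           abelian_ring R \<and> idempotents_lift R I"
proof -
  interpret involutive_ring R sigma
    using assms(1) star_ring_iff_involutive_ring by blast
  show ?thesis
    using strongly_J_star_clean_Quot[OF assms(2,3)] strongly_J_star_clean_idempotents_lift[OF assms(2)]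
      abelian_if_idempotents_fixed strongly_J_star_clean_idempotent_fixed
      strongly_J_star_clean_if_Quot[OF assms(2-4)]
    by blast
qed

end
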